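(* The function $\tilde H:(0,+\infty)\to\mathbb R$ is monotonically decreasing on $(0,1/\sqrt2)$ and monotonically increasing on $[1/\sqrt2,+\infty)$. Moreover, $$\lim_{q\to 0^+}\tilde H(q)=\lim_{q\to+\infty}\tilde H(q)=1.$$
   Context: For $q>0$, let $\tilde q$ be the root, in the closed upper half-plane $\Im z\ge 0$, of the cubic equation $q(z^3-z)+1=0$ having the smallest positive real part, and define $$\tilde H(q)=\exp\Big(\log\Big|\frac{\tilde q-1}{\tilde q+1}\Big|+q\,\Re(\tilde q^{2})\Big).$$ *)

theory Defs
  imports "HOL-Analysis.Analysis"
begin

definition qroots :: "real \<Rightarrow> complex set" where
  "qroots q = {z. complex_of_real q * (z ^ 3 - z) + 1 = 0 \<and> Im z \<ge> 0 \<and> Re z > 0}"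

definition qtilde :: "real \<Rightarrow> complex" where
  "qtilde q = (SOME z. z \<in> qroots q \<and> (\<forall>w\<in>qroots q. Re z \<le> Re w))"

definition Htilde :: "real \<Rightarrow> real" where
  "Htilde q = exp (ln (cmod ((qtilde q - 1) / (qtilde q + 1))) + q * Re ((qtilde q)^2))"

end

theory Submission
  imports Defs "HOL-Real_Asymp.Real_Asymp"
begin

(* For 0 < q <= q_crit = 3 sqrt 3 / 2 the roots of q (z^3 - z) + 1 are -2x and x +- i sqrt (3x^2 - 1)
   with x >= 1 / sqrt 3 and 1/q = 2x (4x^2 - 1), so q-tilde = x + i sqrt (3x^2 - 1); for q >= q_crit all
   roots are real and q-tilde = t in (0, 1 / sqrt 3] with 1/q = t - t^3.  In both regimes q is a strictly
   decreasing function of the parameter, and log H-tilde becomes an explicit function of it, with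
   derivative (12x^2 - 1)(2x^2 - 1) / (2x^2 (4x^2 - 1)^2), resp. (3t^2 - 1) / (1 - t^2)^2.  The sign
   change at x = 1 / sqrt 2, which corresponds to q = 1 / sqrt 2, gives the monotonicity; the limits
   follow because x -> oo as q -> 0 and t -> 0 as q -> oo. *)

lemma inverse_sqrt_le_iff:
  fixes c x :: real
  assumes "0 < c" "0 \<le> x"
  shows "1 / sqrt c \<le> x \<longleftrightarrow> 1 \<le> c * x^2"
proof -
  have "1 / sqrt c \<le> x \<longleftrightarrow> 1 \<le> sqrt (c * x^2)"
    using assms by (simp add: divide_le_eq real_sqrt_mult mult.commute)
  then show ?thesis
    by simp
qed

lemma le_inverse_sqrt_iff:
  fixes c x :: real
  assumes "0 < c" "0 \<le> x"
  shows "x \<le> 1 / sqrt c \<longleftrightarrow> c * x^2 \<le> 1"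
proof -
  have "x \<le> 1 / sqrt c \<longleftrightarrow> sqrt (c * x^2) \<le> 1"
    using assms by (simp add: le_divide_eq real_sqrt_mult mult.commute)
  then show ?thesis
    by simp
qed

lemma half_less_of_inverse_sqrt_3_le:
  fixes x :: real
  assumes "1 / sqrt 3 \<le> x"
  shows "1/2 < x"
proof -
  have "1 / 2 < 1 / sqrt 3"
    using real_sqrt_less_mono[of 3 4] by (simp add: divide_strict_left_mono)
  with assms show ?thesis
    by linarith
qed

lemma inverse_sqrt_3_less_inverse_sqrt_2: "1 / sqrt 3 < 1 / sqrt 2"
  by (simp add: divide_strict_left_mono)

lemma one_less_four_sq:
  fixes x :: real
  assumes "1/2 < x"
  shows "1 < 4*x^2"
proof -
  have "1^2 < (2*x)^2"
    using assms by (intro power_strict_mono) auto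
  then show ?thesis
    by (simp add: power_mult_distrib)
qed

lemma strict_antimono_on_less_iff:
  fixes f :: "'a::linorder \<Rightarrow> 'b::linorder"
  assumes "strict_antimono_on S f" "x \<in> S" "y \<in> S"
  shows "f x < f y \<longleftrightarrow> y < x"
  using assms by (metis monotone_onD not_less_iff_gr_or_eq)

lemma strict_antimono_on_le_iff:
  fixes f :: "'a::linorder \<Rightarrow> 'b::linorder"
  assumes "strict_antimono_on S f" "x \<in> S" "y \<in> S"
  shows "f x \<le> f y \<longleftrightarrow> y \<le> x"
  using strict_antimono_on_less_iff[OF assms(1,3,2)] by (simp add: not_less[symmetric])

lemma monotone_on_antitone_reparam:
  fixes \<psi> :: "'a::linorder \<Rightarrow> 'b::linorder"
  assumes \<psi>: "strict_antimono_on X \<psi>" and Q: "Q \<subseteq> \<psi> ` X"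
    and F: "\<And>x. x \<in> X \<Longrightarrow> F (\<psi> x) = f x" and f: "monotone_on X (\<ge>) ord f"
  shows "monotone_on Q (\<le>) ord F"
proof (rule monotone_onI)
  fix q1 q2 assume "q1 \<in> Q" "q2 \<in> Q" "q1 \<le> q2"
  then obtain x1 x2 where x: "x1 \<in> X" "x2 \<in> X" "q1 = \<psi> x1" "q2 = \<psi> x2"
    using Q by blast
  with \<open>q1 \<le> q2\<close> have "x2 \<le> x1"
    using strict_antimono_on_le_iff[OF \<psi>] by simp
  then show "ord (F q1) (F q2)"
    using x F monotone_onD[OF f] by simp
qed

lemma mono_on_atLeast_join:
  fixes f :: "'a::linorder \<Rightarrow> 'b::preorder"
  assumes ab: "mono_on {a..b} f" and b: "mono_on {b..} f"
  shows "mono_on {a..} f"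
proof (rule mono_onI)
  fix r s assume "r \<in> {a..}" "s \<in> {a..}" "r \<le> s"
  consider "s \<le> b" | "b \<le> r" | "r < b" "b < s"
    by fastforce
  then show "f r \<le> f s"
  proof cases
    case 1
    then show ?thesis
      using mono_onD[OF ab] \<open>r \<in> {a..}\<close> \<open>s \<in> {a..}\<close> \<open>r \<le> s\<close> by auto
  next
    case 2
    then show ?thesis
      using mono_onD[OF b] \<open>r \<le> s\<close> by auto
  next
    case 3
    then have "f r \<le> f b" "f b \<le> f s"
      using mono_onD[OF ab] mono_onD[OF b] \<open>r \<in> {a..}\<close> by auto
    then show ?thesis
      by (rule order_trans)
  qed
qed

lemma qtilde_eqI:
  assumes "z \<in> qroots q" and "\<And>w. w \<in> qroots q \<Longrightarrow> w = z \<or> Re z < Re w"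
  shows "qtilde q = z"
  unfolding qtilde_def
proof (rule some_equality)
  show "z \<in> qroots q \<and> (\<forall>w\<in>qroots q. Re z \<le> Re w)"
    using assms by force
next
  fix w assume "w \<in> qroots q \<and> (\<forall>v\<in>qroots q. Re w \<le> Re v)"
  then show "w = z"
    using assms by force
qed

lemma cubic_eq_0_iff_Vieta:
  fixes a b c q w :: complex
  assumes "a + b + c = 0" "a*b + b*c + c*a = -1" "q*(a*b*c) = -1"
  shows "q*(w^3 - w) + 1 = 0 \<longleftrightarrow> w = a \<or> w = b \<or> w = c"
proof -
  have "q*(w - a)*(w - b)*(w - c) = q*(w^3 - (a + b + c)*w^2 + (a*b + b*c + c*a)*w) - q*(a*b*c)"
    by algebra
  then have "q*(w^3 - w) + 1 = q*(w - a)*(w - b)*(w - c)"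
    using assms by simp
  moreover have "q \<noteq> 0"
    using assms(3) by auto
  ultimately show ?thesis
    by simp
qed

lemma cubic_eq_0_iff_cplx_root:
  fixes q x :: real and w :: complex
  assumes "1 \<le> 3*x^2" "q * (2*x*(4*x^2 - 1)) = 1"
  defines "z \<equiv> Complex x (sqrt (3*x^2 - 1))"
  shows "of_real q * (w^3 - w) + 1 = 0 \<longleftrightarrow> w = - of_real (2*x) \<or> w = z \<or> w = cnj z"
proof (rule cubic_eq_0_iff_Vieta[of _ z, unfolded mult.assoc])
  have sum: "z + cnj z = of_real (2*x)"
    by (simp add: z_def complex_eq_iff)
  have prod: "z * cnj z = of_real (4*x^2 - 1)"
    using assms(1) by (simp add: z_def complex_eq_iff power2_eq_square)
  show "- of_real (2*x) + z + cnj z = 0"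
    using sum by (simp add: algebra_simps)
  have "- of_real (2*x) * z + z * cnj z + cnj z * - of_real (2*x) = z * cnj z - of_real (2*x) * (z + cnj z)"
    by algebra
  also have "\<dots> = of_real (4*x^2 - 1 - (2*x)^2)"
    by (simp add: sum prod power2_eq_square)
  finally show "- of_real (2*x) * z + z * cnj z + cnj z * - of_real (2*x) = -1"
    by (simp add: power2_eq_square)
  have "of_real q * (- of_real (2*x) * (z * cnj z)) = - of_real (q * (2*x*(4*x^2 - 1)))"
    by (simp only: mult.assoc prod of_real_mult of_real_minus mult_minus_left mult_minus_right)
  then show "of_real q * (- of_real (2*x) * (z * cnj z)) = -1"
    using assms(2) by simp
qed

lemma cubic_eq_0_iff_real_root:
  fixes q t a b :: real and w :: complex
  assumes sum: "a + b = - t" and prod: "a * b = t^2 - 1" and q: "q * (t - t^3) = 1"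
  shows "of_real q * (w^3 - w) + 1 = 0 \<longleftrightarrow> w = of_real t \<or> w = of_real a \<or> w = of_real b"
proof (rule cubic_eq_0_iff_Vieta)
  show "of_real t + of_real a + of_real b = (0::complex)"
    unfolding of_real_add[symmetric] add.assoc sum by simp
  have "t * a + b * t = t * (a + b)"
    by algebra
  then have pairs: "t * a + a * b + b * t = -1"
    using sum prod by (simp add: power2_eq_square)
  show "of_real t * of_real a + of_real a * of_real b + of_real b * of_real t = (-1::complex)"
    unfolding of_real_mult[symmetric] of_real_add[symmetric] pairs by simp
  have "t * (a * b) = - (t - t^3)"
    by (simp add: prod algebra_simps power2_eq_square power3_eq_cube)
  then have triple: "q * (t * a * b) = -1"
    using q by (simp add: right_diff_distrib mult.assoc)
  show "of_real q * (of_real t * of_real a * of_real b) = (-1::complex)"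
    unfolding of_real_mult[symmetric] triple by simp
qed

definition q_of_cplx_root :: "real \<Rightarrow> real" where
  "q_of_cplx_root x = 1 / (2*x*(4*x^2 - 1))"

definition q_of_real_root :: "real \<Rightarrow> real" where
  "q_of_real_root t = 1 / (t - t^3)"

lemma real_root_denom_pos:
  fixes t :: real
  assumes "0 < t" "t^2 < 1"
  shows "0 < t - t^3"
proof -
  have "t * t^2 < t"
    using assms by simp
  then show ?thesis
    by (simp add: power2_eq_square power3_eq_cube)
qed

lemma qtilde_q_of_cplx_root:
  assumes "1 / sqrt 3 \<le> x"
  shows "qtilde (q_of_cplx_root x) = Complex x (sqrt (3*x^2 - 1))"
proof -
  have "1/2 < x"
    using assms by (rule half_less_of_inverse_sqrt_3_le)
  then have x: "0 < x" "1 < 4*x^2" "1 \<le> 3*x^2"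
    using assms one_less_four_sq[of x] inverse_sqrt_le_iff[of 3 x] by auto
  define q where "q = q_of_cplx_root x"
  define z where "z = Complex x (sqrt (3*x^2 - 1))"
  have "q * (2*x*(4*x^2 - 1)) = 1"
    using x by (simp add: q_def q_of_cplx_root_def)
  with x have roots: "of_real q * (w^3 - w) + 1 = 0 \<longleftrightarrow> w = - of_real (2*x) \<or> w = z \<or> w = cnj z"
    for w :: complex
    unfolding z_def by (intro cubic_eq_0_iff_cplx_root) auto
  have "qtilde q = z"
  proof (rule qtilde_eqI)
    show "z \<in> qroots q"
      using roots[of z] x by (simp add: qroots_def z_def)
  next
    fix w assume "w \<in> qroots q"
    then have "w = - of_real (2*x) \<or> w = z \<or> w = cnj z" "Im w \<ge> 0" "Re w > 0"
      using roots[of w] by (auto simp: qroots_def)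
    then show "w = z \<or> Re z < Re w"
      using x by (auto simp: z_def complex_eq_iff)
  qed
  then show ?thesis
    by (simp add: q_def z_def)
qed

lemma qtilde_q_of_real_root:
  assumes "0 < t" "t \<le> 1 / sqrt 3"
  shows "qtilde (q_of_real_root t) = of_real t"
proof -
  have t: "3*t^2 \<le> 1"
    using assms le_inverse_sqrt_iff[of 3 t] by auto
  define q where "q = q_of_real_root t"
  define r where "r = sqrt (4 - 3*t^2)"
  define a where "a = (r - t) / 2"
  define b where "b = (- r - t) / 2"
  have r: "0 < r" "r^2 = 4 - 3*t^2"
    using t by (simp_all add: r_def)
  have "a + b = - t"
    by (simp add: a_def b_def field_simps)
  moreover have "a * b = t^2 - 1"
  proof -
    have "a * b = (t^2 - r^2) / 4"
      by (simp add: a_def b_def power2_eq_square algebra_simps)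
    then show ?thesis
      using r by simp
  qed
  moreover have "q * (t - t^3) = 1"
    using t assms real_root_denom_pos[of t] by (simp add: q_def q_of_real_root_def)
  ultimately have roots: "of_real q * (w^3 - w) + 1 = 0 \<longleftrightarrow> w = of_real t \<or> w = of_real a \<or> w = of_real b"
    for w :: complex
    by (rule cubic_eq_0_iff_real_root)
  have "(3*t)^2 \<le> r^2"
    using t r by (simp add: power_mult_distrib)
  then have "3*t \<le> r"
    by (rule power2_le_imp_le) (use r in simp)
  then have "t \<le> a" "b < 0"
    using assms by (simp_all add: a_def b_def)
  have "qtilde q = of_real t"
  proof (rule qtilde_eqI)
    show "of_real t \<in> qroots q"
      using roots assms by (simp add: qroots_def)
  next
    fix w assume "w \<in> qroots q"
    then have "w = of_real t \<or> w = of_real a \<or> w = of_real b" "Re w > 0"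
      using roots[of w] by (auto simp: qroots_def)
    then show "w = of_real t \<or> Re (of_real t) < Re w"
      using \<open>t \<le> a\<close> \<open>b < 0\<close> by (auto simp: order_le_less)
  qed
  then show ?thesis
    by (simp add: q_def)
qed

definition log_Htilde_cplx :: "real \<Rightarrow> real" where
  "log_Htilde_cplx x = (ln (2*x - 1) - ln (2*x + 1)) / 2 + (1 - 2*x^2) / (2*x*(4*x^2 - 1))"

definition log_Htilde_real :: "real \<Rightarrow> real" where
  "log_Htilde_real t = ln (1 - t) - ln (1 + t) + t / (1 - t^2)"

lemma Htilde_q_of_cplx_root:
  assumes "1 / sqrt 3 \<le> x"
  shows "Htilde (q_of_cplx_root x) = exp (log_Htilde_cplx x)"
proof -
  have "1/2 < x"
    using assms by (rule half_less_of_inverse_sqrt_3_le)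
  then have x: "0 < x" "1 < 2*x" "1 \<le> 3*x^2"
    using assms inverse_sqrt_le_iff[of 3 x] by auto
  define y where "y = sqrt (3*x^2 - 1)"
  have y: "y^2 = 3*x^2 - 1"
    using x by (simp add: y_def)
  have "cmod (Complex x y - 1) = sqrt (2*x*(2*x - 1))"
    using y by (simp add: cmod_def power2_eq_square algebra_simps)
  moreover have "cmod (Complex x y + 1) = sqrt (2*x*(2*x + 1))"
    using y by (simp add: cmod_def power2_eq_square algebra_simps)
  ultimately have ln: "ln (cmod ((Complex x y - 1) / (Complex x y + 1))) = (ln (2*x - 1) - ln (2*x + 1)) / 2"
    using x by (simp add: norm_divide ln_div ln_sqrt ln_mult real_sqrt_mult)
  have re: "Re ((Complex x y)^2) = 1 - 2*x^2"
    using y by (simp add: power2_eq_square)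
  have "qtilde (q_of_cplx_root x) = Complex x y"
    using assms by (simp add: qtilde_q_of_cplx_root y_def)
  then show ?thesis
    unfolding Htilde_def log_Htilde_cplx_def by (simp only: ln re) (simp add: q_of_cplx_root_def)
qed

lemma Htilde_q_of_real_root:
  assumes "0 < t" "t \<le> 1 / sqrt 3"
  shows "Htilde (q_of_real_root t) = exp (log_Htilde_real t)"
proof -
  have "3*t^2 \<le> 1"
    using assms le_inverse_sqrt_iff[of 3 t] by auto
  then have "t^2 < 1"
    by simp
  then have "t < 1"
    using abs_square_less_1[of t] by simp
  have "(of_real t - 1) / (of_real t + 1) = complex_of_real ((t - 1) / (t + 1))"
    by simp
  then have "cmod ((of_real t - 1) / (of_real t + 1)) = (1 - t) / (1 + t)"
    using assms \<open>t < 1\<close> by (simp only: norm_of_real) (simp add: abs_div)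
  then have ln: "ln (cmod ((of_real t - 1) / (of_real t + 1))) = ln (1 - t) - ln (1 + t)"
    using assms \<open>t < 1\<close> by (simp add: ln_div)
  have re: "q_of_real_root t * Re ((of_real t)^2) = t / (1 - t^2)"
    using assms \<open>t^2 < 1\<close> by (simp add: q_of_real_root_def power2_eq_square power3_eq_cube field_simps)
  have "qtilde (q_of_real_root t) = of_real t"
    using assms by (rule qtilde_q_of_real_root)
  then show ?thesis
    unfolding Htilde_def log_Htilde_real_def by (simp only: ln re)
qed

lemma log_Htilde_cplx_deriv:
  assumes "1/2 < x"
  shows "(log_Htilde_cplx has_real_derivative (12*x^2 - 1)*(2*x^2 - 1) / (2*x^2*(4*x^2 - 1)^2)) (at x)"
proof -
  have nz: "x \<noteq> 0" "4*x^2 - 1 \<noteq> 0"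
    using assms one_less_four_sq[of x] by auto
  have "4*x^2 - 1 = (2*x - 1) * (2*x + 1)"
    by algebra
  then have "((\<lambda>x. (ln (2*x - 1) - ln (2*x + 1)) / 2) has_real_derivative 2 / (4*x^2 - 1)) (at x)"
    using assms by (auto intro!: derivative_eq_intros simp: divide_simps)
  moreover have "((\<lambda>x. (1 - 2*x^2) / (2*x*(4*x^2 - 1))) has_real_derivative
      (16*x^4 - 20*x^2 + 2) / (4*x^2*(4*x^2 - 1)^2)) (at x)"
    using nz by (auto intro!: derivative_eq_intros simp: divide_simps) algebra
  ultimately have "(log_Htilde_cplx has_real_derivative
      2 / (4*x^2 - 1) + (16*x^4 - 20*x^2 + 2) / (4*x^2*(4*x^2 - 1)^2)) (at x)"
    unfolding log_Htilde_cplx_def[abs_def] by (rule DERIV_add)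
  moreover have "2 / (4*x^2 - 1) + (16*x^4 - 20*x^2 + 2) / (4*x^2*(4*x^2 - 1)^2)
      = (12*x^2 - 1)*(2*x^2 - 1) / (2*x^2*(4*x^2 - 1)^2)"
    using nz by (simp add: divide_simps) algebra
  ultimately show ?thesis
    by simp
qed

lemma log_Htilde_real_deriv:
  assumes "0 \<le> t" "t < 1"
  shows "(log_Htilde_real has_real_derivative (3*t^2 - 1) / (1 - t^2)^2) (at t)"
proof -
  have "t^2 < 1"
    using assms by (simp add: abs_square_less_1)
  then have "1 - t^2 \<noteq> 0" "1 - t \<noteq> 0" "1 + t \<noteq> 0"
    using assms by auto
  then show ?thesis
    unfolding log_Htilde_real_def[abs_def] using assms
    by (auto intro!: derivative_eq_intros) (simp add: divide_simps, algebra)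
qed

lemma mono_on_log_Htilde_cplx: "mono_on {1 / sqrt 2..} log_Htilde_cplx"
proof (rule mono_onI)
  fix r s assume r: "r \<in> {1 / sqrt 2..}" and "r \<le> s"
  show "log_Htilde_cplx r \<le> log_Htilde_cplx s"
  proof (rule DERIV_nonneg_imp_nondecreasing[OF \<open>r \<le> s\<close>])
    fix x assume "r \<le> x"
    with r have "1 / sqrt 2 \<le> x"
      by simp
    then have "1 / sqrt 3 \<le> x"
      using inverse_sqrt_3_less_inverse_sqrt_2 by linarith
    then have "1/2 < x"
      by (rule half_less_of_inverse_sqrt_3_le)
    moreover from this \<open>1 / sqrt 2 \<le> x\<close> have "1 \<le> 2*x^2"
      using inverse_sqrt_le_iff[of 2 x] by simp
    then have "0 \<le> (12*x^2 - 1)*(2*x^2 - 1) / (2*x^2*(4*x^2 - 1)^2)"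
      by simp
    ultimately show "\<exists>y. (log_Htilde_cplx has_real_derivative y) (at x) \<and> 0 \<le> y"
      using log_Htilde_cplx_deriv by blast
  qed
qed

lemma antimono_on_log_Htilde_cplx: "antimono_on {1 / sqrt 3..1 / sqrt 2} log_Htilde_cplx"
proof (rule monotone_onI)
  fix r s assume r: "r \<in> {1 / sqrt 3..1 / sqrt 2}" and s: "s \<in> {1 / sqrt 3..1 / sqrt 2}"
    and "r \<le> s"
  show "log_Htilde_cplx s \<le> log_Htilde_cplx r"
  proof (rule DERIV_nonpos_imp_nonincreasing[OF \<open>r \<le> s\<close>])
    fix x assume "r \<le> x" "x \<le> s"
    with r s have x: "1 / sqrt 3 \<le> x" "x \<le> 1 / sqrt 2"
      by auto
    then have "1/2 < x"
      by (intro half_less_of_inverse_sqrt_3_le)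
    moreover from this x have "1 \<le> 3*x^2" "2*x^2 \<le> 1"
      using inverse_sqrt_le_iff[of 3 x] le_inverse_sqrt_iff[of 2 x] by auto
    then have "(12*x^2 - 1)*(2*x^2 - 1) / (2*x^2*(4*x^2 - 1)^2) \<le> 0"
      by (simp add: divide_nonpos_nonneg mult_nonneg_nonpos)
    ultimately show "\<exists>y. (log_Htilde_cplx has_real_derivative y) (at x) \<and> y \<le> 0"
      using log_Htilde_cplx_deriv by blast
  qed
qed

lemma antimono_on_log_Htilde_real: "antimono_on {0..1 / sqrt 3} log_Htilde_real"
proof (rule monotone_onI)
  fix r s assume r: "r \<in> {0..1 / sqrt 3}" and s: "s \<in> {0..1 / sqrt 3}" and "r \<le> s"
  show "log_Htilde_real s \<le> log_Htilde_real r"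
  proof (rule DERIV_nonpos_imp_nonincreasing[OF \<open>r \<le> s\<close>])
    fix t assume "r \<le> t" "t \<le> s"
    with r s have "0 \<le> t" "3*t^2 \<le> 1"
      using le_inverse_sqrt_iff[of 3 t] by auto
    moreover from this have "t < 1"
      using abs_square_less_1[of t] by simp
    moreover have "(3*t^2 - 1) / (1 - t^2)^2 \<le> 0"
      using \<open>3*t^2 \<le> 1\<close> by (simp add: divide_nonpos_nonneg)
    ultimately show "\<exists>y. (log_Htilde_real has_real_derivative y) (at t) \<and> y \<le> 0"
      using log_Htilde_real_deriv by blast
  qed
qed

lemma strict_antimono_on_q_of_cplx_root: "strict_antimono_on {1 / sqrt 3..} q_of_cplx_root"
proof (rule monotone_onI)
  fix x y :: real assume "x \<in> {1 / sqrt 3..}" "x < y"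
  then have x: "1/2 < x"
    by (intro half_less_of_inverse_sqrt_3_le) simp
  with \<open>x < y\<close> have "x^2 < y^2"
    by (intro power_strict_mono) auto
  have "1 < 4*x^2"
    using x by (rule one_less_four_sq)
  have "2*x < 2*y" "4*x^2 - 1 < 4*y^2 - 1" "0 < 2*y" "0 \<le> 4*x^2 - 1"
    using x \<open>x < y\<close> \<open>x^2 < y^2\<close> \<open>1 < 4*x^2\<close> by auto
  then have "2*x*(4*x^2 - 1) < 2*y*(4*y^2 - 1)"
    by (rule mult_strict_mono)
  moreover have "0 < 2*x*(4*x^2 - 1)"
    using x \<open>1 < 4*x^2\<close> by simp
  ultimately show "q_of_cplx_root y < q_of_cplx_root x"
    unfolding q_of_cplx_root_def inverse_eq_divide[symmetric] by (rule less_imp_inverse_less)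
qed

lemma strict_antimono_on_q_of_real_root: "strict_antimono_on {0<..1 / sqrt 3} q_of_real_root"
proof (rule monotone_onI)
  fix s t :: real assume "s \<in> {0<..1 / sqrt 3}" "t \<in> {0<..1 / sqrt 3}" "s < t"
  then have "0 < s" "s < t" "3 * s^2 \<le> 1" "3 * t^2 \<le> 1"
    using le_inverse_sqrt_iff[of 3 s] le_inverse_sqrt_iff[of 3 t] by auto
  then have "s^2 < t^2"
    by (intro power_strict_mono) auto
  have "s * t < t^2"
    using \<open>0 < s\<close> \<open>s < t\<close> by (simp add: power2_eq_square)
  with \<open>s^2 < t^2\<close> \<open>3 * t^2 \<le> 1\<close> \<open>s < t\<close> have "0 < (t - s) * (1 - (s^2 + s * t + t^2))"
    by simp
  also have "\<dots> = (t - t^3) - (s - s^3)"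
    by (simp add: algebra_simps power2_eq_square power3_eq_cube)
  finally have "s - s^3 < t - t^3"
    by simp
  moreover have "0 < s - s^3"
    using \<open>0 < s\<close> \<open>3 * s^2 \<le> 1\<close> by (intro real_root_denom_pos) auto
  ultimately show "q_of_real_root t < q_of_real_root s"
    unfolding q_of_real_root_def inverse_eq_divide[symmetric] by (rule less_imp_inverse_less)
qed

definition q_crit :: real where
  "q_crit = 3 * sqrt 3 / 2"

lemma q_crit_pos: "0 < q_crit"
  by (simp add: q_crit_def)

lemma inverse_sqrt_2_less_q_crit: "1 / sqrt 2 < q_crit"
proof -
  have "1 / sqrt 2 < 1" "1 < sqrt 3"
    by simp_all
  then show ?thesis
    unfolding q_crit_def by linarith
qed

lemma q_of_cplx_root_inverse_sqrt_3: "q_of_cplx_root (1 / sqrt 3) = q_crit"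
  by (simp add: q_of_cplx_root_def q_crit_def power_divide field_simps)

lemma q_of_real_root_inverse_sqrt_3: "q_of_real_root (1 / sqrt 3) = q_crit"
  by (simp add: q_of_real_root_def q_crit_def power3_eq_cube field_simps)

lemma q_of_cplx_root_inverse_sqrt_2: "q_of_cplx_root (1 / sqrt 2) = 1 / sqrt 2"
  by (simp add: q_of_cplx_root_def power_divide field_simps)

lemma q_of_cplx_root_surj: "{0<..q_crit} \<subseteq> q_of_cplx_root ` {1 / sqrt 3..}"
proof
  fix q assume q: "q \<in> {0<..q_crit}"
  have "(q_of_cplx_root \<longlongrightarrow> 0) at_top"
    unfolding q_of_cplx_root_def by real_asymp
  then have "\<forall>\<^sub>F b in at_top. q_of_cplx_root b < q \<and> 1 / sqrt 3 \<le> b"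
    using q by (auto intro: eventually_conj order_tendstoD eventually_ge_at_top)
  then obtain b where b: "q_of_cplx_root b < q" "1 / sqrt 3 \<le> b"
    using eventually_happens'[OF trivial_limit_at_top_linorder] by blast
  have "2*x*(4*x^2 - 1) \<noteq> 0" if "1 / sqrt 3 \<le> x" for x
    using half_less_of_inverse_sqrt_3_le[OF that] one_less_four_sq[of x] by simp
  then have "continuous_on {1 / sqrt 3..b} q_of_cplx_root"
    unfolding q_of_cplx_root_def by (intro continuous_intros) auto
  then obtain x where "1 / sqrt 3 \<le> x" "q_of_cplx_root x = q"
    using IVT2'[of q_of_cplx_root b q "1 / sqrt 3"] b q by (auto simp: q_of_cplx_root_inverse_sqrt_3)
  then show "q \<in> q_of_cplx_root ` {1 / sqrt 3..}"
    by auto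
qed

lemma q_of_real_root_surj: "{q_crit..} \<subseteq> q_of_real_root ` {0<..1 / sqrt 3}"
proof
  fix q assume q: "q \<in> {q_crit..}"
  have "filterlim q_of_real_root at_top (at_right 0)"
    unfolding q_of_real_root_def by real_asymp
  then have "\<forall>\<^sub>F a in at_right 0. q \<le> q_of_real_root a"
    by (simp add: filterlim_at_top)
  moreover have "\<forall>\<^sub>F a in at_right 0. a \<in> {0<..<1 / sqrt 3}"
    by (rule eventually_at_right_real) simp
  ultimately obtain a where a: "q \<le> q_of_real_root a" "a \<in> {0<..<1 / sqrt 3}"
    using eventually_happens'[OF trivial_limit_at_right_real eventually_conj] by blast
  have "0 < t - t^3" if "a \<le> t" "t \<le> 1 / sqrt 3" for t
    using that a le_inverse_sqrt_iff[of 3 t] by (intro real_root_denom_pos) auto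
  then have "continuous_on {a..1 / sqrt 3} q_of_real_root"
    unfolding q_of_real_root_def by (intro continuous_intros) force
  then obtain t where "a \<le> t" "t \<le> 1 / sqrt 3" "q_of_real_root t = q"
    using IVT2'[of q_of_real_root "1 / sqrt 3" q a] a q by (auto simp: q_of_real_root_inverse_sqrt_3)
  then show "q \<in> q_of_real_root ` {0<..1 / sqrt 3}"
    using a by force
qed

lemma antimono_on_Htilde_0_inverse_sqrt_2: "antimono_on {0<..<1 / sqrt 2} Htilde"
proof (rule monotone_on_antitone_reparam)
  have sub: "{1 / sqrt 2..} \<subseteq> {1 / sqrt 3..}"
    using inverse_sqrt_3_less_inverse_sqrt_2 by (intro atLeast_subset_iff[THEN iffD2]) simp
  then show "strict_antimono_on {1 / sqrt 2..} q_of_cplx_root"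
    by (rule monotone_on_subset[OF strict_antimono_on_q_of_cplx_root])
  show "{0<..<1 / sqrt 2} \<subseteq> q_of_cplx_root ` {1 / sqrt 2..}"
  proof
    fix q assume q: "q \<in> {0<..<1 / sqrt 2}"
    then have "q \<in> {0<..q_crit}"
      using inverse_sqrt_2_less_q_crit by auto
    then obtain x where x: "x \<in> {1 / sqrt 3..}" "q = q_of_cplx_root x"
      using q_of_cplx_root_surj by auto
    have "q_of_cplx_root x < q_of_cplx_root (1 / sqrt 2)"
      using q x by (simp add: q_of_cplx_root_inverse_sqrt_2)
    then have "1 / sqrt 2 < x"
      using strict_antimono_on_less_iff[OF strict_antimono_on_q_of_cplx_root x(1)] sub by auto
    with x show "q \<in> q_of_cplx_root ` {1 / sqrt 2..}"
      by auto
  qed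
  show "Htilde (q_of_cplx_root x) = exp (log_Htilde_cplx x)" if "x \<in> {1 / sqrt 2..}" for x
    using that sub by (intro Htilde_q_of_cplx_root) auto
  show "monotone_on {1 / sqrt 2..} (\<ge>) (\<ge>) (\<lambda>x. exp (log_Htilde_cplx x))"
    using mono_on_log_Htilde_cplx by (auto simp: monotone_on_def)
qed

lemma mono_on_Htilde_inverse_sqrt_2_q_crit: "mono_on {1 / sqrt 2..q_crit} Htilde"
proof (rule monotone_on_antitone_reparam)
  show "strict_antimono_on {1 / sqrt 3..1 / sqrt 2} q_of_cplx_root"
    by (rule monotone_on_subset[OF strict_antimono_on_q_of_cplx_root]) auto
  show "{1 / sqrt 2..q_crit} \<subseteq> q_of_cplx_root ` {1 / sqrt 3..1 / sqrt 2}"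
  proof
    fix q assume q: "q \<in> {1 / sqrt 2..q_crit}"
    then have "q \<in> {0<..q_crit}"
      using less_le_trans[of 0 "1 / sqrt 2" q] by auto
    then obtain x where x: "x \<in> {1 / sqrt 3..}" "q = q_of_cplx_root x"
      using q_of_cplx_root_surj by auto
    have "q_of_cplx_root (1 / sqrt 2) \<le> q_of_cplx_root x"
      using q x by (simp add: q_of_cplx_root_inverse_sqrt_2)
    then have "x \<le> 1 / sqrt 2"
      using strict_antimono_on_le_iff[OF strict_antimono_on_q_of_cplx_root _ x(1)]
        inverse_sqrt_3_less_inverse_sqrt_2 by auto
    with x show "q \<in> q_of_cplx_root ` {1 / sqrt 3..1 / sqrt 2}"
      by auto
  qed
  show "Htilde (q_of_cplx_root x) = exp (log_Htilde_cplx x)" if "x \<in> {1 / sqrt 3..1 / sqrt 2}" for x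
    using that by (intro Htilde_q_of_cplx_root) auto
  show "monotone_on {1 / sqrt 3..1 / sqrt 2} (\<ge>) (\<le>) (\<lambda>x. exp (log_Htilde_cplx x))"
    using antimono_on_log_Htilde_cplx by (auto simp: monotone_on_def)
qed

lemma mono_on_Htilde_q_crit: "mono_on {q_crit..} Htilde"
proof (rule monotone_on_antitone_reparam)
  show "strict_antimono_on {0<..1 / sqrt 3} q_of_real_root"
    by (rule strict_antimono_on_q_of_real_root)
  show "{q_crit..} \<subseteq> q_of_real_root ` {0<..1 / sqrt 3}"
    by (rule q_of_real_root_surj)
  show "Htilde (q_of_real_root t) = exp (log_Htilde_real t)" if "t \<in> {0<..1 / sqrt 3}" for t
    using that by (intro Htilde_q_of_real_root) auto
  show "monotone_on {0<..1 / sqrt 3} (\<ge>) (\<le>) (\<lambda>t. exp (log_Htilde_real t))"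
    using antimono_on_log_Htilde_real by (auto simp: monotone_on_def)
qed

lemma inv_into_q_of_cplx_root:
  assumes "q \<in> {0<..q_crit}"
  shows "inv_into {1 / sqrt 3..} q_of_cplx_root q \<in> {1 / sqrt 3..}"
    and "q_of_cplx_root (inv_into {1 / sqrt 3..} q_of_cplx_root q) = q"
proof -
  have "q \<in> q_of_cplx_root ` {1 / sqrt 3..}"
    using q_of_cplx_root_surj assms by blast
  then show "inv_into {1 / sqrt 3..} q_of_cplx_root q \<in> {1 / sqrt 3..}"
    and "q_of_cplx_root (inv_into {1 / sqrt 3..} q_of_cplx_root q) = q"
    by (rule inv_into_into, rule f_inv_into_f)
qed

lemma inv_into_q_of_real_root:
  assumes "q_crit \<le> q"
  shows "inv_into {0<..1 / sqrt 3} q_of_real_root q \<in> {0<..1 / sqrt 3}"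
    and "q_of_real_root (inv_into {0<..1 / sqrt 3} q_of_real_root q) = q"
proof -
  have "q \<in> q_of_real_root ` {0<..1 / sqrt 3}"
    using q_of_real_root_surj assms by blast
  then show "inv_into {0<..1 / sqrt 3} q_of_real_root q \<in> {0<..1 / sqrt 3}"
    and "q_of_real_root (inv_into {0<..1 / sqrt 3} q_of_real_root q) = q"
    by (rule inv_into_into, rule f_inv_into_f)
qed

lemma filterlim_inv_into_q_of_cplx_root:
  "filterlim (inv_into {1 / sqrt 3..} q_of_cplx_root) at_top (at_right 0)"
  unfolding filterlim_at_top
proof
  fix B :: real
  define b where "b = max B (1 / sqrt 3)"
  have b: "b \<in> {1 / sqrt 3..}"
    by (simp add: b_def)
  then have "1/2 < b"
    by (intro half_less_of_inverse_sqrt_3_le) simp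
  then have "0 < 2*b*(4*b^2 - 1)"
    using one_less_four_sq[of b] by simp
  then have "0 < min q_crit (q_of_cplx_root b)"
    using q_crit_pos by (simp add: q_of_cplx_root_def)
  then show "\<forall>\<^sub>F q in at_right 0. B \<le> inv_into {1 / sqrt 3..} q_of_cplx_root q"
  proof (rule eventually_at_right_real[THEN eventually_mono])
    fix q assume q: "q \<in> {0<..<min q_crit (q_of_cplx_root b)}"
    then have "q_of_cplx_root (inv_into {1 / sqrt 3..} q_of_cplx_root q) < q_of_cplx_root b"
      using inv_into_q_of_cplx_root(2)[of q] by auto
    then have "b < inv_into {1 / sqrt 3..} q_of_cplx_root q"
      using strict_antimono_on_less_iff[OF strict_antimono_on_q_of_cplx_root inv_into_q_of_cplx_root(1) b] q
      by auto
    then show "B \<le> inv_into {1 / sqrt 3..} q_of_cplx_root q"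
      by (simp add: b_def)
  qed
qed

lemma tendsto_inv_into_q_of_real_root: "(inv_into {0<..1 / sqrt 3} q_of_real_root \<longlongrightarrow> 0) at_top"
proof (rule order_tendstoI)
  fix a :: real assume "a < 0"
  show "\<forall>\<^sub>F q in at_top. a < inv_into {0<..1 / sqrt 3} q_of_real_root q"
    using eventually_ge_at_top[of q_crit]
    by (rule eventually_mono) (use inv_into_q_of_real_root(1) \<open>a < 0\<close> in fastforce)
next
  fix a :: real assume "0 < a"
  define b where "b = min a (1 / sqrt 3)"
  have b: "b \<in> {0<..1 / sqrt 3}"
    using \<open>0 < a\<close> by (simp add: b_def)
  show "\<forall>\<^sub>F q in at_top. inv_into {0<..1 / sqrt 3} q_of_real_root q < a"
    using eventually_gt_at_top[of "max q_crit (q_of_real_root b)"]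
  proof (rule eventually_mono)
    fix q assume q: "max q_crit (q_of_real_root b) < q"
    then have "q_of_real_root b < q_of_real_root (inv_into {0<..1 / sqrt 3} q_of_real_root q)"
      using inv_into_q_of_real_root(2)[of q] by auto
    then have "inv_into {0<..1 / sqrt 3} q_of_real_root q < b"
      using strict_antimono_on_less_iff[OF strict_antimono_on_q_of_real_root b inv_into_q_of_real_root(1)] q
      by auto
    then show "inv_into {0<..1 / sqrt 3} q_of_real_root q < a"
      by (simp add: b_def)
  qed
qed

lemma Htilde_tendsto_at_right_0: "(Htilde \<longlongrightarrow> 1) (at_right 0)"
proof -
  have "((\<lambda>x. exp (log_Htilde_cplx x)) \<longlongrightarrow> 1) at_top"
    unfolding log_Htilde_cplx_def by real_asymp
  then have "((\<lambda>q. exp (log_Htilde_cplx (inv_into {1 / sqrt 3..} q_of_cplx_root q))) \<longlongrightarrow> 1) (at_right 0)"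
    using filterlim_inv_into_q_of_cplx_root by (rule filterlim_compose)
  moreover have "\<forall>\<^sub>F q in at_right 0. Htilde q = exp (log_Htilde_cplx (inv_into {1 / sqrt 3..} q_of_cplx_root q))"
    using eventually_at_right_real[OF q_crit_pos]
  proof (rule eventually_mono)
    fix q assume "q \<in> {0<..<q_crit}"
    then show "Htilde q = exp (log_Htilde_cplx (inv_into {1 / sqrt 3..} q_of_cplx_root q))"
      using inv_into_q_of_cplx_root[of q] Htilde_q_of_cplx_root by fastforce
  qed
  ultimately show ?thesis
    by (simp add: tendsto_cong)
qed

lemma Htilde_tendsto_at_top: "(Htilde \<longlongrightarrow> 1) at_top"
proof -
  have "isCont (\<lambda>t. exp (log_Htilde_real t)) 0"
    unfolding log_Htilde_real_def by (intro continuous_intros) auto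
  then have "((\<lambda>q. exp (log_Htilde_real (inv_into {0<..1 / sqrt 3} q_of_real_root q)))
      \<longlongrightarrow> exp (log_Htilde_real 0)) at_top"
    using tendsto_inv_into_q_of_real_root by (rule isCont_tendsto_compose)
  moreover have "\<forall>\<^sub>F q in at_top. Htilde q = exp (log_Htilde_real (inv_into {0<..1 / sqrt 3} q_of_real_root q))"
    using eventually_ge_at_top[of q_crit]
  proof (rule eventually_mono)
    fix q assume "q_crit \<le> q"
    then show "Htilde q = exp (log_Htilde_real (inv_into {0<..1 / sqrt 3} q_of_real_root q))"
      using inv_into_q_of_real_root[of q] Htilde_q_of_real_root by fastforce
  qed
  ultimately show ?thesis
    by (simp add: tendsto_cong log_Htilde_real_def)
qed

theorem theorem3:
  shows "antimono_on {0<..<1 / sqrt 2} Htilde \<and> mono_on {1 / sqrt 2..} Htilde \<and>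
         (Htilde \<longlongrightarrow> 1) (at_right 0) \<and> (Htilde \<longlongrightarrow> 1) at_top"
  using antimono_on_Htilde_0_inverse_sqrt_2
    mono_on_atLeast_join[OF mono_on_Htilde_inverse_sqrt_2_q_crit mono_on_Htilde_q_crit]
    Htilde_tendsto_at_right_0 Htilde_tendsto_at_top
  by blast

end
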